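(* Let $n\ge 3$ and let $A \in \mathcal{G}_s^{n\times n}(\{0,t\})$, and write $\det A = \sum_{j=0}^{n} c_j s^{n-j}t^j$ as a polynomial in the indeterminates $s,t$. If the coefficient $c_2$ of $s^{n-2}t^2$ is zero, then the coefficient $c_3$ of $s^{n-3}t^3$ satisfies $|c_3| \le \lfloor n/2\rfloor\,\lfloor (n-1)/2\rfloor$.
   Context: $\mathcal{G}_s^{n\times n}(\{0,t\})$ denotes the set of all $n\times n$ upper Hessenberg matrices $A=(a_{ij})$ with $a_{i+1,i} = s$ for $1\le i\le n-1$, $a_{ij}=0$ for $i > j+1$, and $a_{ij}\in\{0,t\}$ for all $i \le j$. Here $s,t$ are treated as indeterminates, so $\det A$ is a homogeneous polynomial of degree $n$ in $s,t$ with integer coefficients. *)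

theory Defs
  imports "Jordan_Normal_Form.Determinant" "HOL-Computational_Algebra.Polynomial"
begin

text \<open>Bivariate integer polynomials in s,t are modelled as int poly poly:
  the outer variable is t, the inner (coefficient) variable is s.\<close>

definition var_t :: "int poly poly" where
  "var_t = monom 1 1"

definition var_s :: "int poly poly" where
  "var_s = [: monom 1 1 :]"

text \<open>The set G_s^{n x n}({0,t}) with 0-based indices: subdiagonal entries s,
  entries strictly below the subdiagonal 0, entries on/above diagonal in {0,t}.\<close>

definition hess_set :: "nat \<Rightarrow> int poly poly mat set" where
  "hess_set n = {A. A \<in> carrier_mat n n \<and>
      (\<forall>i<n. \<forall>j<n.
        (i = j + 1 \<longrightarrow> A $$ (i, j) = var_s) \<and>
        (j + 1 < i \<longrightarrow> A $$ (i, j) = 0) \<and>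
        (i \<le> j \<longrightarrow> A $$ (i, j) \<in> {0, var_t}))}"

definition st_coeff :: "nat \<Rightarrow> int poly poly \<Rightarrow> nat \<Rightarrow> int" where
  "st_coeff n p j = coeff (coeff p j) (n - j)"

end

theory Submission
  imports Defs
begin

text \<open>Expanding the determinant of a Hessenberg matrix with subdiagonal \<open>s\<close> block by block
  writes it as \<open>\<Sum>\<^sub>k c\<^sub>k t\<^sup>k (-s)\<^sup>n\<^sup>-\<^sup>k\<close>, where \<open>c\<^sub>k\<close> counts the ways to cut the
  index range \<open>0, \<dots>, n-1\<close> into \<open>k\<close> consecutive blocks \<open>[a, b]\<close> with \<open>A\<^sub>a\<^sub>b = t\<close>.
  Let \<open>m = n - 1\<close>, let \<open>X\<close> be the set of \<open>b < m\<close> such that \<open>[0, b]\<close> is an admissible first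
  block and \<open>Y\<close> the set of \<open>q < m\<close> such that \<open>[q+1, m]\<close> is an admissible last block.
  If \<open>c\<^sub>2 = 0\<close> then \<open>X\<close> and \<open>Y\<close> are disjoint, so \<open>|X| + |Y| \<le> m\<close>; every cut into three
  blocks is determined by its first and last block, so \<open>c\<^sub>3 \<le> |X| |Y| \<le> \<lfloor>m/2\<rfloor> \<lceil>m/2\<rceil>\<close>.\<close>

text \<open>Expansion along the first row: deleting row \<open>0\<close> and column \<open>b\<close> leaves a block triangular
  matrix whose leading \<open>b \<times> b\<close> block is triangular with diagonal \<open>s\<close>.\<close>

fun hess_expansion :: "'a::comm_ring_1 \<Rightarrow> nat \<Rightarrow> (nat \<Rightarrow> nat \<Rightarrow> 'a) \<Rightarrow> 'a" where
  "hess_expansion s 0 f = 1"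
| "hess_expansion s (Suc n) f =
     (\<Sum>b\<le>n. f 0 b * (-s)^b * hess_expansion s (n - b) (\<lambda>i j. f (i + b + 1) (j + b + 1)))"

lemma hess_expansion_cong:
  assumes "\<And>i j. i \<le> j \<Longrightarrow> j < n \<Longrightarrow> f i j = g i j"
  shows "hess_expansion s n f = hess_expansion s n g"
  using assms
proof (induction n arbitrary: f g rule: less_induct)
  case (less n)
  show ?case
  proof (cases n)
    case (Suc m)
    have "hess_expansion s (m - b) (\<lambda>i j. f (i + b + 1) (j + b + 1)) =
          hess_expansion s (m - b) (\<lambda>i j. g (i + b + 1) (j + b + 1))" if "b \<le> m" for b
      by (rule less.IH) (use that Suc less.prems in auto)
    moreover have "f 0 b = g 0 b" if "b \<le> m" for b
      using that Suc less.prems by auto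
    ultimately show ?thesis
      unfolding Suc hess_expansion.simps by (intro sum.cong) auto
  qed simp
qed

text \<open>This is the shape of the Laplace expansion of a Hessenberg matrix along column \<open>0\<close>.\<close>

lemma hess_expansion_Suc_Suc:
  "hess_expansion s (Suc (Suc m)) f =
     f 0 0 * hess_expansion s (Suc m) (\<lambda>i j. f (i + 1) (j + 1))
     - s * hess_expansion s (Suc m) (\<lambda>i j. if i = 0 then f 0 (j + 1) else f (i + 1) (j + 1))"
proof -
  have "hess_expansion s (Suc (Suc m)) f =
        f 0 0 * hess_expansion s (Suc m) (\<lambda>i j. f (i + 1) (j + 1)) +
        (\<Sum>b\<le>m. f 0 (Suc b) * (-s)^(Suc b) *
           hess_expansion s (m - b) (\<lambda>i j. f (i + b + 2) (j + b + 2)))"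
    by (simp only: hess_expansion.simps sum.atMost_Suc_shift) (simp add: add_ac)
  also have "(\<Sum>b\<le>m. f 0 (Suc b) * (-s)^(Suc b) *
               hess_expansion s (m - b) (\<lambda>i j. f (i + b + 2) (j + b + 2))) =
             - s * hess_expansion s (Suc m) (\<lambda>i j. if i = 0 then f 0 (j + 1) else f (i + 1) (j + 1))"
    by (simp add: sum_distrib_left mult_ac)
  finally show ?thesis
    by simp
qed

definition hessenberg :: "'a::comm_ring_1 \<Rightarrow> nat \<Rightarrow> 'a mat \<Rightarrow> bool" where
  "hessenberg s n A \<longleftrightarrow> A \<in> carrier_mat n n \<and>
     (\<forall>i<n. \<forall>j<n. (i = j + 1 \<longrightarrow> A $$ (i, j) = s) \<and> (j + 1 < i \<longrightarrow> A $$ (i, j) = 0))"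

lemma hessenberg_mat_delete_col0:
  assumes "hessenberg s (Suc n) A" and "i \<le> 1"
  shows "hessenberg s n (mat_delete A i 0)"
  using assms unfolding hessenberg_def mat_delete_def by auto

lemma det_hessenberg:
  assumes "hessenberg s n A"
  shows "det A = hess_expansion s n (\<lambda>i j. A $$ (i, j))"
  using assms
proof (induction n arbitrary: A rule: less_induct)
  case (less n)
  have A: "A \<in> carrier_mat n n"
    using less.prems by (simp add: hessenberg_def)
  consider "n = 0" | "n = 1" | m where "n = Suc (Suc m)"
    by (metis One_nat_def not0_implies_Suc)
  then show ?case
  proof cases
    case 1
    with A show ?thesis by simp
  next
    case 2
    with A show ?thesis
      by (simp add: laplace_expansion_column[OF A] cofactor_def mat_delete_def)
  next
    case (3 m)
    have minor: "det (mat_delete A i 0) = hess_expansion s (Suc m) (\<lambda>i' j. mat_delete A i 0 $$ (i', j))"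
      if "i \<le> 1" for i
      using that less.prems 3 by (intro less.IH hessenberg_mat_delete_col0) auto
    have "det A = (\<Sum>i<n. A $$ (i, 0) * cofactor A i 0)"
      using 3 by (intro laplace_expansion_column[OF A]) simp
    also have "\<dots> = (\<Sum>i\<in>{0, 1}. A $$ (i, 0) * cofactor A i 0)"
      using less.prems 3 unfolding hessenberg_def by (intro sum.mono_neutral_right) auto
    also have "\<dots> = A $$ (0, 0) * det (mat_delete A 0 0) - s * det (mat_delete A 1 0)"
      using less.prems 3 unfolding hessenberg_def cofactor_def by auto
    also have "\<dots> = hess_expansion s n (\<lambda>i j. A $$ (i, j))"
      unfolding minor[OF le0] minor[OF order.refl] 3 hess_expansion_Suc_Suc
      using A 3 by (intro arg_cong2[where f = "(-)"] arg_cong2[where f = "(*)"] refl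
          hess_expansion_cong) (auto simp: mat_delete_def)
    finally show ?thesis .
  qed
qed

fun block_partitions :: "nat \<Rightarrow> nat \<Rightarrow> (nat \<Rightarrow> nat \<Rightarrow> bool) \<Rightarrow> nat" where
  "block_partitions 0 n B = (if n = 0 then 1 else 0)"
| "block_partitions (Suc k) 0 B = 0"
| "block_partitions (Suc k) (Suc n) B =
     (\<Sum>b\<le>n. if B 0 b then block_partitions k (n - b) (\<lambda>i j. B (i + b + 1) (j + b + 1)) else 0)"

lemma block_partitions_eq_0_if_less: "n < k \<Longrightarrow> block_partitions k n B = 0"
  by (induction k n B rule: block_partitions.induct) auto

lemma homogeneous_sum_shift:
  fixes s t :: "'a::comm_ring_1"
  assumes "b \<le> m" and "\<And>k. m - b < k \<Longrightarrow> c k = 0"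
  shows "t * (-s)^b * (\<Sum>k\<le>m - b. of_nat (c k) * t^k * (-s)^(m - b - k)) =
         (\<Sum>k\<le>m. of_nat (c k) * t^Suc k * (-s)^(m - k))"
proof -
  have "t * (-s)^b * (of_nat (c k) * t^k * (-s)^(m - b - k)) = of_nat (c k) * t^Suc k * (-s)^(m - k)"
    if "k \<le> m - b" for k
  proof -
    from that assms(1) have "m - k = b + (m - b - k)"
      by simp
    then show ?thesis
      by (simp add: power_add mult_ac)
  qed
  then have "t * (-s)^b * (\<Sum>k\<le>m - b. of_nat (c k) * t^k * (-s)^(m - b - k)) =
             (\<Sum>k\<le>m - b. of_nat (c k) * t^Suc k * (-s)^(m - k))"
    by (simp add: sum_distrib_left)
  also have "\<dots> = (\<Sum>k\<le>m. of_nat (c k) * t^Suc k * (-s)^(m - k))"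
    using assms by (intro sum.mono_neutral_left) auto
  finally show ?thesis .
qed

lemma hess_expansion_zero_or_t:
  assumes "\<And>i j. i \<le> j \<Longrightarrow> j < n \<Longrightarrow> f i j = (if B i j then t else 0)"
  shows "hess_expansion s n f = (\<Sum>k\<le>n. of_nat (block_partitions k n B) * t^k * (-s)^(n - k))"
  using assms
proof (induction n arbitrary: f B rule: less_induct)
  case (less n)
  show ?case
  proof (cases n)
    case (Suc m)
    let ?c = "\<lambda>b k. block_partitions k (m - b) (\<lambda>i j. B (i + b + 1) (j + b + 1))"
    have first_block: "f 0 b * (-s)^b * hess_expansion s (m - b) (\<lambda>i j. f (i + b + 1) (j + b + 1)) =
        (\<Sum>k\<le>m. of_nat (if B 0 b then ?c b k else 0) * t^Suc k * (-s)^(m - k))" if "b \<le> m" for b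
    proof -
      have "hess_expansion s (m - b) (\<lambda>i j. f (i + b + 1) (j + b + 1)) =
            (\<Sum>k\<le>m - b. of_nat (?c b k) * t^k * (-s)^(m - b - k))"
        using that Suc less.prems by (intro less.IH) auto
      moreover have "t * (-s)^b * (\<Sum>k\<le>m - b. of_nat (?c b k) * t^k * (-s)^(m - b - k)) =
                     (\<Sum>k\<le>m. of_nat (?c b k) * t^Suc k * (-s)^(m - k))"
        using that by (intro homogeneous_sum_shift) (auto intro: block_partitions_eq_0_if_less)
      ultimately show ?thesis
        using that Suc less.prems[of 0 b] by (cases "B 0 b") simp_all
    qed
    have "hess_expansion s n f =
          (\<Sum>b\<le>m. \<Sum>k\<le>m. of_nat (if B 0 b then ?c b k else 0) * t^Suc k * (-s)^(m - k))"
      unfolding Suc hess_expansion.simps using first_block by (intro sum.cong) auto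
    also have "\<dots> = (\<Sum>k\<le>m. of_nat (block_partitions (Suc k) (Suc m) B) * t^Suc k * (-s)^(m - k))"
      by (subst sum.swap) (simp add: sum_distrib_right of_nat_sum)
    also have "\<dots> = (\<Sum>k\<le>n. of_nat (block_partitions k n B) * t^k * (-s)^(n - k))"
      unfolding Suc by (subst sum.atMost_Suc_shift) simp
    finally show ?thesis .
  qed simp
qed

lemma var_t_power: "var_t ^ k = monom 1 k"
  unfolding var_t_def by (simp add: monom_power)

lemma uminus_var_s_power: "(- var_s) ^ m = [:monom ((-1)^m) m:]"
proof (induction m)
  case (Suc m)
  have "(- var_s) ^ Suc m = [:- monom 1 1 * monom ((-1)^m) m:]"
    using Suc.IH by (simp add: var_s_def)
  also have "- monom 1 1 * monom ((-1::int)^m) m = monom ((-1)^Suc m) (Suc m)"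
    by (simp add: mult_monom minus_monom)
  finally show ?case .
qed (simp add: one_pCons)

lemma st_monomial:
  "of_nat c * var_t^k * (-var_s)^m = monom (monom ((-1)^m * int c) m) k"
proof -
  have "monom 1 k * [:monom ((-1::int)^m) m:] = monom (monom ((-1)^m) m) k"
    by (simp add: monom_altdef)
  then show ?thesis
    unfolding var_t_power uminus_var_s_power by (simp add: of_nat_poly smult_monom)
qed

lemma st_coeff_homogeneous_sum:
  assumes "j \<le> n"
  shows "st_coeff n (\<Sum>k\<le>n. of_nat (c k) * var_t^k * (-var_s)^(n - k)) j = (-1)^(n - j) * int (c j)"
  using assms unfolding st_monomial st_coeff_def by (simp add: coeff_sum coeff_monom)

lemma block_partitions_1: "block_partitions 1 (Suc m) B = (if B 0 m then 1 else 0)"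
proof -
  have "block_partitions 1 (Suc m) B = (\<Sum>b\<le>m. if b = m then (if B 0 m then 1 else 0) else 0)"
    by (simp only: One_nat_def block_partitions.simps) (intro sum.cong, auto)
  then show ?thesis
    by simp
qed

lemma block_partitions_2:
  "block_partitions 2 (Suc m) B = card {b. b < m \<and> B 0 b \<and> B (Suc b) m}"
proof -
  have summand: "(if B 0 b then block_partitions 1 (m - b) (\<lambda>i j. B (i + b + 1) (j + b + 1)) else 0) =
                 (if b < m \<and> B 0 b \<and> B (Suc b) m then 1 else 0)" if "b \<le> m" for b
  proof (cases "b < m")
    case True
    then obtain r where r: "m = Suc (b + r)"
      using less_imp_Suc_add by blast
    then have "m - b = Suc r"
      by simp
    then show ?thesis
      unfolding block_partitions_1 \<open>m - b = Suc r\<close> using r by (simp add: add_ac)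
  qed (use that in \<open>simp add: block_partitions_eq_0_if_less\<close>)
  have "block_partitions 2 (Suc m) B =
        (\<Sum>b\<le>m. if B 0 b then block_partitions 1 (m - b) (\<lambda>i j. B (i + b + 1) (j + b + 1)) else 0)"
    by (simp only: numeral_2_eq_2 block_partitions.simps One_nat_def)
  also have "\<dots> = (\<Sum>b\<le>m. if b < m \<and> B 0 b \<and> B (Suc b) m then 1 else 0)"
    using summand by (intro sum.cong) auto
  also have "\<dots> = card {b \<in> {..m}. b < m \<and> B 0 b \<and> B (Suc b) m}"
    by (simp add: sum.inter_filter[symmetric])
  also have "{b \<in> {..m}. b < m \<and> B 0 b \<and> B (Suc b) m} = {b. b < m \<and> B 0 b \<and> B (Suc b) m}"
    by auto
  finally show ?thesis .
qed

lemma block_partitions_3_le: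
  "block_partitions 3 (Suc m) B \<le> card {b. b < m \<and> B 0 b} * card {q. q < m \<and> B (Suc q) m}"
proof -
  define Y where "Y = {q. q < m \<and> B (Suc q) m}"
  have summand: "(if B 0 b then block_partitions 2 (m - b) (\<lambda>i j. B (i + b + 1) (j + b + 1)) else 0)
                 \<le> (if b < m \<and> B 0 b then card Y else 0)" if "b \<le> m" for b
  proof (cases "b < m")
    case True
    then obtain r where r: "m = Suc (b + r)"
      using less_imp_Suc_add by blast
    then have "m - b = Suc r"
      by simp
    have "block_partitions 2 (Suc r) (\<lambda>i j. B (i + b + 1) (j + b + 1))
          = card {c. c < r \<and> B (0 + b + 1) (c + b + 1) \<and> B (Suc c + b + 1) (r + b + 1)}"
      by (rule block_partitions_2)
    also have "\<dots> \<le> card Y"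
      by (rule card_inj_on_le[where f = "\<lambda>c. c + b + 1"]) (auto simp: Y_def r inj_on_def add.commute)
    finally show ?thesis
      using True unfolding \<open>m - b = Suc r\<close> by simp
  qed (use that in \<open>simp add: block_partitions_eq_0_if_less\<close>)
  have "block_partitions 3 (Suc m) B =
        (\<Sum>b\<le>m. if B 0 b then block_partitions 2 (m - b) (\<lambda>i j. B (i + b + 1) (j + b + 1)) else 0)"
    by (simp only: numeral_3_eq_3 numeral_2_eq_2 block_partitions.simps)
  also have "\<dots> \<le> (\<Sum>b\<le>m. if b < m \<and> B 0 b then card Y else 0)"
    using summand by (intro sum_mono) auto
  also have "\<dots> = card {b \<in> {..m}. b < m \<and> B 0 b} * card Y"
    by (simp add: sum.inter_filter[symmetric])
  also have "{b \<in> {..m}. b < m \<and> B 0 b} = {b. b < m \<and> B 0 b}"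
    by auto
  finally show ?thesis
    unfolding Y_def .
qed

lemma mult_le_floor_ceil_half:
  fixes a b m :: nat
  assumes "a + b \<le> m"
  shows "a * b \<le> (m div 2) * ((m + 1) div 2)"
proof -
  have "4 * (int a * int b) \<le> (int a + int b) * (int a + int b)"
    using zero_le_square[of "int a - int b"] by (simp add: algebra_simps)
  then have "4 * (a * b) \<le> (a + b) * (a + b)"
    by (simp flip: of_nat_mult of_nat_add)
  also have "\<dots> \<le> m * m"
    using assms by (intro mult_le_mono)
  also have "\<dots> \<le> 4 * ((m div 2) * ((m + 1) div 2)) + 1"
    by (cases "even m") (auto elim!: evenE oddE simp: algebra_simps)
  finally show ?thesis
    by linarith
qed

lemma block_partitions_3_le_if_2_eq_0:
  assumes "block_partitions 2 (Suc m) B = 0"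
  shows "block_partitions 3 (Suc m) B \<le> (m div 2) * ((m + 1) div 2)"
proof -
  define X where "X = {b. b < m \<and> B 0 b}"
  define Y where "Y = {q. q < m \<and> B (Suc q) m}"
  have "X \<inter> Y = {}"
    using assms unfolding block_partitions_2 X_def Y_def by auto
  moreover have "X \<subseteq> {..<m}" and "Y \<subseteq> {..<m}"
    unfolding X_def Y_def by auto
  ultimately have "card X + card Y \<le> m"
    by (metis card_Un_disjoint card_lessThan card_mono finite_lessThan finite_subset le_sup_iff)
  then have "card X * card Y \<le> (m div 2) * ((m + 1) div 2)"
    by (rule mult_le_floor_ceil_half)
  with block_partitions_3_le[of m B] show ?thesis
    unfolding X_def Y_def by linarith
qed

lemma st_coeff_det_hess_set:
  assumes "A \<in> hess_set n" and "j \<le> n"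
  shows "st_coeff n (det A) j = (-1)^(n - j) * int (block_partitions j n (\<lambda>a b. A $$ (a, b) = var_t))"
proof -
  have "hessenberg var_s n A"
    using assms(1) unfolding hess_set_def hessenberg_def by auto
  moreover have "A $$ (i, j) = (if A $$ (i, j) = var_t then var_t else 0)" if "i \<le> j" "j < n" for i j
  proof -
    have "A $$ (i, j) \<in> {0, var_t}"
      using assms(1) that unfolding hess_set_def by auto
    then show ?thesis
      by auto
  qed
  ultimately have "det A = (\<Sum>k\<le>n. of_nat (block_partitions k n (\<lambda>a b. A $$ (a, b) = var_t)) *
                               var_t^k * (-var_s)^(n - k))"
    by (simp add: det_hessenberg hess_expansion_zero_or_t)
  then show ?thesis
    using assms(2) by (simp add: st_coeff_homogeneous_sum)
qed

theorem lemma5p6: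
  fixes n :: nat and A :: "int poly poly mat"
  assumes "n \<ge> 3"
    and "A \<in> hess_set n"
    and "st_coeff n (det A) 2 = 0"
  shows "\<bar>st_coeff n (det A) 3\<bar> \<le> int ((n div 2) * ((n - 1) div 2))"
proof -
  define B where "B = (\<lambda>a b. A $$ (a, b) = var_t)"
  obtain m where n: "n = Suc m"
    using assms(1) by (cases n) auto
  have "block_partitions 2 (Suc m) B = 0"
    using st_coeff_det_hess_set[OF assms(2), of 2] assms(1,3) unfolding B_def n by simp
  then have "block_partitions 3 (Suc m) B \<le> (m div 2) * ((m + 1) div 2)"
    by (rule block_partitions_3_le_if_2_eq_0)
  moreover have "\<bar>st_coeff n (det A) 3\<bar> = int (block_partitions 3 n B)"
    using st_coeff_det_hess_set[OF assms(2), of 3] assms(1) unfolding B_def by (simp add: abs_mult)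
  moreover have "(n div 2) * ((n - 1) div 2) = (m div 2) * ((m + 1) div 2)"
    unfolding n by simp
  ultimately show ?thesis
    by (simp only: n of_nat_le_iff)
qed

end
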